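(* Let $c_1>0$, $c_2>0$ and $k\in\mathbb{R}\setminus\{0\}$, and consider the system on $\mathbb{R}^3$ $$\dot z_1=\frac1{c_2}z_2z_3,\qquad \dot z_2=-\frac1{c_1}z_1z_3,\qquad \dot z_3=-\frac{k}{c_1}z_1 .$$ Let $H>0$ be a constant. Then the solution of this system restricted to the constant level surface $$z_1^2+\frac{c_1}{c_2}z_2^2=2H$$ is $$z_1(t)=\sqrt{2H}\cos\theta(t),\qquad z_2(t)=\sqrt{\frac{c_2}{c_1}}\sqrt{2H}\sin\theta(t),\qquad z_3(t)=-\sqrt{c_1c_2}\,\dot\theta(t),$$ where $\theta(t)$ is a solution of the pendulum equation $$\ddot\theta(t)=\frac{k}{c_1^2}\sqrt{\frac{c_1}{c_2}}\sqrt{2H}\cos\theta(t).$$ *)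

theory Defs
  imports "HOL-Analysis.Analysis"
begin

definition sys_solution ::
  "real \<Rightarrow> real \<Rightarrow> real \<Rightarrow> real set \<Rightarrow> (real \<Rightarrow> real) \<Rightarrow> (real \<Rightarrow> real) \<Rightarrow> (real \<Rightarrow> real) \<Rightarrow> bool" where
  "sys_solution c1 c2 k I z1 z2 z3 \<longleftrightarrow>
     (\<forall>t\<in>I. (z1 has_real_derivative (1 / c2) * z2 t * z3 t) (at t)
          \<and> (z2 has_real_derivative - (1 / c1) * z1 t * z3 t) (at t)
          \<and> (z3 has_real_derivative - (k / c1) * z1 t) (at t))"

definition pendulum_solution ::
  "real \<Rightarrow> real \<Rightarrow> real \<Rightarrow> real \<Rightarrow> real set \<Rightarrow> (real \<Rightarrow> real) \<Rightarrow> (real \<Rightarrow> real) \<Rightarrow> bool" where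
  "pendulum_solution c1 c2 k H I \<theta> d\<theta> \<longleftrightarrow>
     (\<forall>t\<in>I. (\<theta> has_real_derivative d\<theta> t) (at t)
          \<and> (d\<theta> has_real_derivative (k / c1\<^sup>2) * sqrt (c1 / c2) * sqrt (2 * H) * cos (\<theta> t)) (at t))"

end

theory Submission
  imports Defs "HOL-Analysis.Interval_Integral"
begin

text \<open>
  On the level set the normalised point \<open>u = z1 / sqrt (2 H)\<close>, \<open>v = z2 / (sqrt (c2 / c1) sqrt (2 H))\<close>
  lies on the unit circle, and the first two equations say that it rotates with angular velocity
  \<open>\<omega> = - z3 / sqrt (c1 c2)\<close>. An antiderivative \<open>\<theta>\<close> of \<open>\<omega>\<close> with the right initial value is therefore
  an angle of \<open>(u, v)\<close> on the whole interval, and differentiating \<open>z3 = - sqrt (c1 c2) \<theta>'\<close> with the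
  third equation gives the pendulum equation.
\<close>

lemma open_interval_eq_einterval:
  fixes I :: "real set"
  assumes "open I" "is_interval I"
  shows "I = einterval (INF x\<in>I. ereal x) (SUP x\<in>I. ereal x)"
proof
  show "I \<subseteq> einterval (INF x\<in>I. ereal x) (SUP x\<in>I. ereal x)"
  proof
    fix x assume "x \<in> I"
    obtain a where "a < x" "{a<..x} \<subseteq> I"
      using open_left[OF assms(1) \<open>x \<in> I\<close>, of "x - 1"] by auto
    then have "(a + x) / 2 \<in> I \<and> (a + x) / 2 < x"
      by auto
    then obtain y where "y \<in> I" "y < x"
      by blast
    obtain b where "x < b" "{x..<b} \<subseteq> I"
      using open_right[OF assms(1) \<open>x \<in> I\<close>, of "x + 1"] by auto
    then have "(x + b) / 2 \<in> I \<and> x < (x + b) / 2"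
      by auto
    then obtain z where "z \<in> I" "x < z"
      by blast
    show "x \<in> einterval (INF x\<in>I. ereal x) (SUP x\<in>I. ereal x)"
      unfolding einterval_iff Inf_less_iff less_Sup_iff
      using \<open>y \<in> I\<close> \<open>y < x\<close> \<open>z \<in> I\<close> \<open>x < z\<close> by auto
  qed
  show "einterval (INF x\<in>I. ereal x) (SUP x\<in>I. ereal x) \<subseteq> I"
  proof
    fix x assume "x \<in> einterval (INF x\<in>I. ereal x) (SUP x\<in>I. ereal x)"
    then obtain y z where "y \<in> I" "z \<in> I" "y < x" "x < z"
      unfolding einterval_iff Inf_less_iff less_Sup_iff by auto
    with assms(2) show "x \<in> I"
      unfolding is_interval_1 by (meson less_imp_le)
  qed
qed

lemma open_interval_has_antiderivative:
  fixes f :: "real \<Rightarrow> 'a::euclidean_space"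
  assumes "open I" "is_interval I" and cont: "\<And>t. t \<in> I \<Longrightarrow> isCont f t"
  obtains F where "\<And>t. t \<in> I \<Longrightarrow> (F has_vector_derivative f t) (at t)"
proof (cases "I = {}")
  case False
  let ?a = "INF x\<in>I. ereal x" and ?b = "SUP x\<in>I. ereal x"
  have I: "I = einterval ?a ?b"
    by (rule open_interval_eq_einterval[OF assms(1,2)])
  with False have "?a < ?b"
    by (metis einterval_iff equals0I order.strict_trans)
  moreover have "isCont f x" if "?a < ereal x" "ereal x < ?b" for x
    using cont that by (metis I einterval_iff)
  ultimately obtain F where "\<forall>x. ?a < ereal x \<longrightarrow> ereal x < ?b \<longrightarrow> (F has_vector_derivative f x) (at x)"
    using einterval_antiderivative by blast
  then show thesis
    by (metis I einterval_iff that)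
qed auto

lemma DERIV_zero_interval_eq:
  fixes f :: "real \<Rightarrow> real"
  assumes "is_interval I" "\<And>t. t \<in> I \<Longrightarrow> (f has_real_derivative 0) (at t)" "s \<in> I" "t \<in> I"
  shows "f s = f t"
  using has_field_derivative_zero_constant[OF is_interval_convex[OF assms(1)], of f]
    assms(2-4) has_field_derivative_at_within by metis

lemma circular_motion_eq_cos_sin:
  fixes u v \<theta> \<omega> :: "real \<Rightarrow> real"
  assumes "is_interval I" "t0 \<in> I" "t \<in> I"
    and u: "\<And>t. t \<in> I \<Longrightarrow> (u has_real_derivative - \<omega> t * v t) (at t)"
    and v: "\<And>t. t \<in> I \<Longrightarrow> (v has_real_derivative \<omega> t * u t) (at t)"
    and \<theta>: "\<And>t. t \<in> I \<Longrightarrow> (\<theta> has_real_derivative \<omega> t) (at t)"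
    and "u t0 = cos (\<theta> t0)" "v t0 = sin (\<theta> t0)"
  shows "u t = cos (\<theta> t) \<and> v t = sin (\<theta> t)"
proof -
  txt \<open>The coordinates of \<open>(u, v)\<close> in the frame rotating with angle \<open>\<theta>\<close>: both rotate with speed \<open>\<omega>\<close>.\<close>
  define G where "G t = u t * cos (\<theta> t) + v t * sin (\<theta> t)" for t
  define K where "K t = v t * cos (\<theta> t) - u t * sin (\<theta> t)" for t
  have "(G has_real_derivative 0) (at t)" "(K has_real_derivative 0) (at t)" if "t \<in> I" for t
    unfolding G_def[abs_def] K_def[abs_def] using that
    by (auto intro!: derivative_eq_intros u v \<theta> simp: algebra_simps)
  then have "G t = G t0" "K t = K t0"
    using DERIV_zero_interval_eq assms(1-3) by metis+
  then have GK: "G t = 1" "K t = 0"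
    using assms(7,8) by (simp_all add: G_def K_def power2_eq_square[symmetric])
  have "u t = u t * ((sin (\<theta> t))\<^sup>2 + (cos (\<theta> t))\<^sup>2)"
    by simp
  also have "\<dots> = G t * cos (\<theta> t) - K t * sin (\<theta> t)"
    unfolding G_def K_def by algebra
  finally have u_eq: "u t = G t * cos (\<theta> t) - K t * sin (\<theta> t)" .
  have "v t = v t * ((sin (\<theta> t))\<^sup>2 + (cos (\<theta> t))\<^sup>2)"
    by simp
  also have "\<dots> = G t * sin (\<theta> t) + K t * cos (\<theta> t)"
    unfolding G_def K_def by algebra
  finally show ?thesis
    using u_eq GK by simp
qed

lemma circular_motion_has_angle:
  fixes u v \<omega> :: "real \<Rightarrow> real"
  assumes "open I" "is_interval I"
    and u: "\<And>t. t \<in> I \<Longrightarrow> (u has_real_derivative - \<omega> t * v t) (at t)"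
    and v: "\<And>t. t \<in> I \<Longrightarrow> (v has_real_derivative \<omega> t * u t) (at t)"
    and \<omega>: "\<And>t. t \<in> I \<Longrightarrow> isCont \<omega> t"
    and unit: "\<And>t. t \<in> I \<Longrightarrow> (u t)\<^sup>2 + (v t)\<^sup>2 = 1"
  obtains \<theta> where "\<And>t. t \<in> I \<Longrightarrow> (\<theta> has_real_derivative \<omega> t) (at t)"
    and "\<And>t. t \<in> I \<Longrightarrow> u t = cos (\<theta> t) \<and> v t = sin (\<theta> t)"
proof (cases "I = {}")
  case False
  then obtain t0 where "t0 \<in> I"
    by blast
  obtain F where F: "\<And>t. t \<in> I \<Longrightarrow> (F has_real_derivative \<omega> t) (at t)"
    using open_interval_has_antiderivative[OF assms(1,2) \<omega>]
    by (metis has_real_derivative_iff_has_vector_derivative)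
  obtain \<phi> where "u t0 = cos \<phi>" "v t0 = sin \<phi>"
    using sincos_total_2pi[OF unit[OF \<open>t0 \<in> I\<close>]] by metis
  define \<theta> where "\<theta> t = F t - F t0 + \<phi>" for t
  have \<theta>: "(\<theta> has_real_derivative \<omega> t) (at t)" if "t \<in> I" for t
    unfolding \<theta>_def[abs_def] using F[OF that] by (auto intro!: derivative_eq_intros)
  moreover have "u t0 = cos (\<theta> t0)" "v t0 = sin (\<theta> t0)"
    by (simp_all add: \<theta>_def \<open>u t0 = cos \<phi>\<close> \<open>v t0 = sin \<phi>\<close>)
  ultimately show thesis
    using circular_motion_eq_cos_sin[OF assms(2) \<open>t0 \<in> I\<close> _ u v \<theta>] that by metis
qed auto

lemma sqrt_coefficient_identities:
  fixes c1 c2 :: real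
  assumes "c1 > 0" "c2 > 0"
  shows "sqrt (c1 * c2) = c1 * sqrt (c2 / c1)" "sqrt (c1 / c2) = 1 / sqrt (c2 / c1)"
    and "c2 = c1 * (sqrt (c2 / c1))\<^sup>2"
proof -
  have "c1 * c2 = c1\<^sup>2 * (c2 / c1)"
    using assms by (simp add: power2_eq_square)
  then have "sqrt (c1 * c2) = sqrt (c1\<^sup>2) * sqrt (c2 / c1)"
    by (simp only: real_sqrt_mult)
  then show "sqrt (c1 * c2) = c1 * sqrt (c2 / c1)"
    using assms by simp
  show "sqrt (c1 / c2) = 1 / sqrt (c2 / c1)"
    by (simp add: real_sqrt_divide)
  show "c2 = c1 * (sqrt (c2 / c1))\<^sup>2"
    using assms by simp
qed

lemma pendulum_orbit_on_level:
  fixes c1 c2 H x :: real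
  assumes "c1 > 0" "c2 > 0" "H \<ge> 0"
  shows "(sqrt (2 * H) * cos x)\<^sup>2 + (c1 / c2) * (sqrt (c2 / c1) * sqrt (2 * H) * sin x)\<^sup>2 = 2 * H"
  using assms by (simp add: power_mult_distrib sin_squared_eq field_simps)

lemma pendulum_solution_imp_sys_solution:
  fixes c1 c2 k H :: real
  assumes "c1 > 0" "c2 > 0"
    and "pendulum_solution c1 c2 k H I \<theta> d\<theta>"
  shows "sys_solution c1 c2 k I (\<lambda>t. sqrt (2 * H) * cos (\<theta> t))
           (\<lambda>t. sqrt (c2 / c1) * sqrt (2 * H) * sin (\<theta> t)) (\<lambda>t. - sqrt (c1 * c2) * d\<theta> t)"
proof -
  define a where "a = sqrt (2 * H)"
  define b where "b = sqrt (c2 / c1)"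
  have "b > 0"
    using assms(1,2) by (simp add: b_def)
  note coeffs = sqrt_coefficient_identities[OF assms(1,2), folded b_def]
  show ?thesis
    unfolding sys_solution_def a_def[symmetric] b_def[symmetric] coeffs(1)
  proof (intro ballI conjI)
    fix t assume "t \<in> I"
    then have \<theta>: "(\<theta> has_real_derivative d\<theta> t) (at t)"
      and d\<theta>: "(d\<theta> has_real_derivative (k / c1\<^sup>2) * (1 / b) * a * cos (\<theta> t)) (at t)"
      using assms(3) unfolding pendulum_solution_def a_def[symmetric] coeffs(2) by auto
    show "((\<lambda>t. a * cos (\<theta> t)) has_real_derivative
        (1 / c2) * (b * a * sin (\<theta> t)) * (- (c1 * b) * d\<theta> t)) (at t)"
      unfolding coeffs(3) using assms(1) \<open>b > 0\<close>
      by (auto intro!: derivative_eq_intros \<theta> simp: field_simps power2_eq_square)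
    show "((\<lambda>t. b * a * sin (\<theta> t)) has_real_derivative
        - (1 / c1) * (a * cos (\<theta> t)) * (- (c1 * b) * d\<theta> t)) (at t)"
      using assms(1)
      by (auto intro!: derivative_eq_intros \<theta> simp: field_simps)
    show "((\<lambda>t. - (c1 * b) * d\<theta> t) has_real_derivative - (k / c1) * (a * cos (\<theta> t))) (at t)"
      using assms(1) \<open>b > 0\<close>
      by (auto intro!: derivative_eq_intros d\<theta> simp: field_simps power2_eq_square)
  qed
qed

lemma sys_solution_on_level_imp_pendulum:
  fixes c1 c2 k H :: real
  assumes "c1 > 0" "c2 > 0" "H > 0" "open I" "is_interval I"
    and sys: "sys_solution c1 c2 k I z1 z2 z3"
    and level: "\<And>t. t \<in> I \<Longrightarrow> (z1 t)\<^sup>2 + (c1 / c2) * (z2 t)\<^sup>2 = 2 * H"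
  shows "\<exists>\<theta> d\<theta>. pendulum_solution c1 c2 k H I \<theta> d\<theta>
           \<and> (\<forall>t\<in>I. z1 t = sqrt (2 * H) * cos (\<theta> t)
                  \<and> z2 t = sqrt (c2 / c1) * sqrt (2 * H) * sin (\<theta> t)
                  \<and> z3 t = - sqrt (c1 * c2) * d\<theta> t)"
proof -
  define a where "a = sqrt (2 * H)"
  define b where "b = sqrt (c2 / c1)"
  have "a > 0" "a\<^sup>2 = 2 * H" "b > 0"
    using assms(1-3) by (simp_all add: a_def b_def)
  note coeffs = sqrt_coefficient_identities[OF assms(1,2), folded b_def]
  have z1: "(z1 has_real_derivative (1 / c2) * z2 t * z3 t) (at t)"
    and z2: "(z2 has_real_derivative - (1 / c1) * z1 t * z3 t) (at t)"
    and z3: "(z3 has_real_derivative - (k / c1) * z1 t) (at t)" if "t \<in> I" for t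
    using sys that unfolding sys_solution_def by auto
  define \<omega> where "\<omega> t = - z3 t / (c1 * b)" for t
  obtain \<theta> where \<theta>: "\<And>t. t \<in> I \<Longrightarrow> (\<theta> has_real_derivative \<omega> t) (at t)"
    and cos_sin: "\<And>t. t \<in> I \<Longrightarrow> z1 t / a = cos (\<theta> t) \<and> z2 t / (b * a) = sin (\<theta> t)"
  proof (rule circular_motion_has_angle[OF assms(4,5)])
    show "((\<lambda>t. z1 t / a) has_real_derivative - \<omega> t * (z2 t / (b * a))) (at t)" if "t \<in> I" for t
      unfolding \<omega>_def using z1[OF that, unfolded coeffs(3)] \<open>a > 0\<close> \<open>b > 0\<close> assms(1)
      by (auto intro!: derivative_eq_intros simp: field_simps power2_eq_square)
    show "((\<lambda>t. z2 t / (b * a)) has_real_derivative \<omega> t * (z1 t / a)) (at t)" if "t \<in> I" for t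
      unfolding \<omega>_def using z2[OF that] \<open>a > 0\<close> \<open>b > 0\<close> assms(1)
      by (auto intro!: derivative_eq_intros simp: field_simps)
    show "isCont \<omega> t" if "t \<in> I" for t
      unfolding \<omega>_def[abs_def] using DERIV_isCont[OF z3[OF that]] \<open>b > 0\<close> assms(1)
      by (auto intro!: continuous_intros)
    show "(z1 t / a)\<^sup>2 + (z2 t / (b * a))\<^sup>2 = 1" if "t \<in> I" for t
      using level[OF that, unfolded coeffs(3), folded \<open>a\<^sup>2 = 2 * H\<close>] \<open>a > 0\<close> \<open>b > 0\<close> assms(1)
      by (simp add: field_simps power2_eq_square)
  qed blast
  have "(\<omega> has_real_derivative (k / c1\<^sup>2) * sqrt (c1 / c2) * a * cos (\<theta> t)) (at t)" if "t \<in> I" for t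
    unfolding \<omega>_def[abs_def] coeffs(2) using z3[OF that] cos_sin[OF that] \<open>a > 0\<close> \<open>b > 0\<close> assms(1)
    by (auto intro!: derivative_eq_intros simp: field_simps power2_eq_square)
  then have "pendulum_solution c1 c2 k H I \<theta> \<omega>"
    using \<theta> unfolding pendulum_solution_def a_def by blast
  moreover have "z1 t = a * cos (\<theta> t) \<and> z2 t = b * a * sin (\<theta> t) \<and> z3 t = - (c1 * b) * \<omega> t"
    if "t \<in> I" for t
    using cos_sin[OF that] \<open>a > 0\<close> \<open>b > 0\<close> assms(1) by (auto simp: \<omega>_def field_simps)
  ultimately show ?thesis
    unfolding coeffs(1) a_def b_def by blast
qed

theorem proposition5p3:
  fixes c1 c2 k H :: real and I :: "real set"
  assumes "c1 > 0" and "c2 > 0" and "k \<noteq> 0" and "H > 0"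
    and "open I" and "is_interval I"
  shows "(\<forall>z1 z2 z3. sys_solution c1 c2 k I z1 z2 z3
            \<and> (\<forall>t\<in>I. (z1 t)\<^sup>2 + (c1 / c2) * (z2 t)\<^sup>2 = 2 * H)
          \<longrightarrow> (\<exists>\<theta> d\<theta>. pendulum_solution c1 c2 k H I \<theta> d\<theta>
                 \<and> (\<forall>t\<in>I. z1 t = sqrt (2 * H) * cos (\<theta> t)
                        \<and> z2 t = sqrt (c2 / c1) * sqrt (2 * H) * sin (\<theta> t)
                        \<and> z3 t = - sqrt (c1 * c2) * d\<theta> t)))
       \<and> (\<forall>\<theta> d\<theta>. pendulum_solution c1 c2 k H I \<theta> d\<theta> \<longrightarrow>
            (let z1 = (\<lambda>t. sqrt (2 * H) * cos (\<theta> t));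
                 z2 = (\<lambda>t. sqrt (c2 / c1) * sqrt (2 * H) * sin (\<theta> t));
                 z3 = (\<lambda>t. - sqrt (c1 * c2) * d\<theta> t)
             in sys_solution c1 c2 k I z1 z2 z3
                \<and> (\<forall>t\<in>I. (z1 t)\<^sup>2 + (c1 / c2) * (z2 t)\<^sup>2 = 2 * H)))"
  using sys_solution_on_level_imp_pendulum[OF assms(1,2,4,5,6)]
    pendulum_solution_imp_sys_solution[OF assms(1,2)]
    pendulum_orbit_on_level[OF assms(1,2) less_imp_le[OF assms(4)]]
  by (auto simp: Let_def)

end
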